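(* In the setting of the context, for each $A\ge1$ there exists $s_{03}(A)>1$ such that for all $s_0\ge s_{03}(A)$, writing $\psi=\psi_{s_0,d_0,d_1}$ (decomposed at time $s=s_0$): (i) there exists a rectangle $\mathcal D_{s_0}\subset[-2,2]^2$ such that the linear map $\Phi:(d_0,d_1)\mapsto(\psi_0,\psi_1)$ is one-to-one from $\mathcal D_{s_0}$ onto $\left[-\frac{A}{s_0^{2\beta+1}},\frac{A}{s_0^{2\beta+1}}\right]^2$, maps $\partial\mathcal D_{s_0}$ into $\partial\left(\left[-\frac{A}{s_0^{2\beta+1}},\frac{A}{s_0^{2\beta+1}}\right]^2\right)$, and has degree one on the boundary; (ii) for all $(d_0,d_1)\in\mathcal D_{s_0}$: $\psi_e\equiv0$, $|\psi_-(y)|<\frac1{s_0^\gamma}(1+|y|^3)$ for all $y\in\mathbb{R}$, $|\psi_0|\le\frac{A}{s_0^{2\beta+1}}$, $|\psi_1|\le\frac{A}{s_0^{2\beta+1}}$, $|\psi_2|<\frac1{s_0^{4\beta-1}}$ (in particular $\psi\in\vartheta_A(s_0)$); (iii) for all $(d_0,d_1)\in\mathcal D_{s_0}$: $\|\partial_y\psi\|_{L^\infty(\mathbb{R})}\le\frac{CA}{s_0^{2\beta+1}}\le\frac1{s_0^{\gamma-3\beta}}$ and $|\partial_y\psi_-(y)|\le\frac1{s_0^\gamma}(1+|y|^3)$ for all $y\in\mathbb{R}$, where $C>0$ depends only on $p,\mu,K$.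
   Context: Let $p>3$, $\mu>0$, $q=\frac{2p}{p+1}$, $\beta=\frac{p+1}{2(p-1)}$. Let $\rho(y)=e^{-y^2/4}/\sqrt{4\pi}$, $h_0=1,h_1=y,h_2=y^2-2$, $k_m=h_m/\int_{\mathbb{R}}h_m^2\rho$. Fix $\chi_0\in C^\infty([0,\infty),[0,1])$ nonincreasing, $\chi_0=1$ on $[0,1]$, support in $[0,2]$, a fixed constant $K\ge6$ (large, depending only on $p,\mu$), and $\chi(y,s)=\chi_0(|y|/(Ks^\beta))$. For $r\in L^\infty(\mathbb{R})$ and time $s$: $r_b=\chi(\cdot,s)r$, $r_e=(1-\chi(\cdot,s))r$, $r_m=\int r_bk_m\rho$ ($m=0,1,2$), $r_-=r_b-\sum_{m=0}^2r_mh_m$. Fix $\gamma$ with $3\beta<\gamma<\min(5\beta-1,2\beta+1)$. For $A\ge1$, $s\ge1$, $\vartheta_A(s)$ is the set of $r\in L^\infty(\mathbb{R})$ with $\|r_e\|_{L^\infty}\le A^2s^{-(\gamma-3\beta)}$, $\|r_-(y)/(1+|y|^3)\|_{L^\infty}\le As^{-\gamma}$, $|r_0|,|r_1|\le As^{-(2\beta+1)}$, $|r_2|\le\sqrt As^{-(4\beta-1)}$. For $A\ge1$, $s_0>1$, $d_0,d_1\in\mathbb{R}$: $\psi_{s_0,d_0,d_1}(y)=\frac{A}{s_0^{2\beta+1}}(d_0+d_1y)\chi(2y,s_0)$. *)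

theory Defs
  imports "HOL-Complex_Analysis.Complex_Analysis"
begin

definition beta :: "real \<Rightarrow> real" where
  "beta p = (p + 1) / (2 * (p - 1))"

definition rho :: "real \<Rightarrow> real" where
  "rho y = exp (- (y^2) / 4) / sqrt (4 * pi)"

text \<open>Only m = 0, 1, 2 are used: h0 = 1, h1 = y, h2 = y^2 - 2.\<close>
definition hpoly :: "nat \<Rightarrow> real \<Rightarrow> real" where
  "hpoly m y = (if m = 0 then 1 else if m = 1 then y else y^2 - 2)"

definition kpoly :: "nat \<Rightarrow> real \<Rightarrow> real" where
  "kpoly m y = hpoly m y / (LINT x|lborel. (hpoly m x)^2 * rho x)"

definition smooth_on_nonneg :: "(real \<Rightarrow> real) \<Rightarrow> bool" where
  "smooth_on_nonneg f \<longleftrightarrow>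
     (\<exists>g. (\<forall>n x. ((deriv ^^ n) g) differentiable (at x)) \<and> (\<forall>x\<ge>0. g x = f x))"

definition admissible_chi0 :: "(real \<Rightarrow> real) \<Rightarrow> bool" where
  "admissible_chi0 chi0 \<longleftrightarrow> smooth_on_nonneg chi0
     \<and> (\<forall>x\<ge>0. 0 \<le> chi0 x \<and> chi0 x \<le> 1)
     \<and> (\<forall>x y. 0 \<le> x \<longrightarrow> x \<le> y \<longrightarrow> chi0 y \<le> chi0 x)
     \<and> (\<forall>x. 0 \<le> x \<longrightarrow> x \<le> 1 \<longrightarrow> chi0 x = 1)
     \<and> (\<forall>x>2. chi0 x = 0)"

definition cutoff :: "(real \<Rightarrow> real) \<Rightarrow> real \<Rightarrow> real \<Rightarrow> real \<Rightarrow> real \<Rightarrow> real" where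
  "cutoff chi0 K p y s = chi0 (\<bar>y\<bar> / (K * s powr beta p))"

definition rb :: "(real \<Rightarrow> real) \<Rightarrow> real \<Rightarrow> real \<Rightarrow> (real \<Rightarrow> real) \<Rightarrow> real \<Rightarrow> real \<Rightarrow> real" where
  "rb chi0 K p r s y = cutoff chi0 K p y s * r y"

definition re :: "(real \<Rightarrow> real) \<Rightarrow> real \<Rightarrow> real \<Rightarrow> (real \<Rightarrow> real) \<Rightarrow> real \<Rightarrow> real \<Rightarrow> real" where
  "re chi0 K p r s y = (1 - cutoff chi0 K p y s) * r y"

definition rmode :: "(real \<Rightarrow> real) \<Rightarrow> real \<Rightarrow> real \<Rightarrow> (real \<Rightarrow> real) \<Rightarrow> real \<Rightarrow> nat \<Rightarrow> real" where
  "rmode chi0 K p r s m = (LINT y|lborel. rb chi0 K p r s y * kpoly m y * rho y)"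

definition rminus :: "(real \<Rightarrow> real) \<Rightarrow> real \<Rightarrow> real \<Rightarrow> (real \<Rightarrow> real) \<Rightarrow> real \<Rightarrow> real \<Rightarrow> real" where
  "rminus chi0 K p r s y = rb chi0 K p r s y - (\<Sum>m\<le>2. rmode chi0 K p r s m * hpoly m y)"

definition Linfty :: "(real \<Rightarrow> real) \<Rightarrow> bool" where
  "Linfty r \<longleftrightarrow> r \<in> borel_measurable lborel \<and> (\<exists>M. AE y in lborel. \<bar>r y\<bar> \<le> M)"

definition vartheta :: "(real \<Rightarrow> real) \<Rightarrow> real \<Rightarrow> real \<Rightarrow> real \<Rightarrow> real \<Rightarrow> real \<Rightarrow> (real \<Rightarrow> real) set" where
  "vartheta chi0 K p gam A s = {r. Linfty r
     \<and> (AE y in lborel. \<bar>re chi0 K p r s y\<bar> \<le> A^2 * s powr (- (gam - 3 * beta p)))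
     \<and> (AE y in lborel. \<bar>rminus chi0 K p r s y\<bar> / (1 + \<bar>y\<bar>^3) \<le> A * s powr (- gam))
     \<and> \<bar>rmode chi0 K p r s 0\<bar> \<le> A * s powr (- (2 * beta p + 1))
     \<and> \<bar>rmode chi0 K p r s 1\<bar> \<le> A * s powr (- (2 * beta p + 1))
     \<and> \<bar>rmode chi0 K p r s 2\<bar> \<le> sqrt A * s powr (- (4 * beta p - 1))}"

definition psi :: "(real \<Rightarrow> real) \<Rightarrow> real \<Rightarrow> real \<Rightarrow> real \<Rightarrow> real \<Rightarrow> real \<Rightarrow> real \<Rightarrow> real \<Rightarrow> real" where
  "psi chi0 K p A s0 d0 d1 y =
     A / s0 powr (2 * beta p + 1) * (d0 + d1 * y) * cutoff chi0 K p (2 * y) s0"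

text \<open>Topological degree of a map F of the plane restricted to the boundary of the
  rectangle cbox (a0,a1) (b0,b1), viewed as a map into a curve around the origin:
  the winding number about 0 of the image of the positively oriented boundary path.\<close>
definition boundary_degree :: "(real \<times> real \<Rightarrow> real \<times> real) \<Rightarrow> real \<Rightarrow> real \<Rightarrow> real \<Rightarrow> real \<Rightarrow> complex" where
  "boundary_degree F a0 a1 b0 b1 =
     winding_number ((\<lambda>z. Complex (fst (F (Re z, Im z))) (snd (F (Re z, Im z))))
                      \<circ> rectpath (Complex a0 a1) (Complex b0 b1)) 0"

end

theory Submission
  imports Defs "HOL-Probability.Probability"
begin

text \<open>Write a = A s0^-(2\<beta>+1) and J_k for the k-th moment of \<chi>(2y, s0) \<rho>(y). The cut-off
  \<chi>(2\<cdot>, s0) is supported in |y| \<le> K s0^\<beta>, where \<chi>(\<cdot>, s0) = 1, so \<psi> equals its bounded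
  part and its modes are explicit: \<psi>_0 = a J_0 d0, \<psi>_1 = a J_2 d1 / 2 and
  \<psi>_2 = a (J_2 - 2 J_0) d0 / 8. Truncating a Gaussian moment at |y| = K s0^\<beta> / 2 costs at most
  4 (K s0^\<beta>)^-2 times the next even moment, so J_0 \<in> [1/2, 1] and J_2 \<in> [1, 2]. Hence \<Phi> is a
  diagonal linear map taking the rectangle [-1/J_0, 1/J_0] \<times> [-2/J_2, 2/J_2] \<subseteq> [-2, 2]^2 onto
  [-a, a]^2, boundary onto boundary and with degree one. On that rectangle \<psi>_-, \<partial>_y \<psi> and
  \<partial>_y \<psi>_- are bounded by (7 + 5 M) a (1 + |y|^3), where M bounds \<chi>0' on [0, 2]; since
  \<gamma> < 2\<beta> + 1 and \<beta> < 1, any constant multiple of a eventually lies below s0^-\<gamma> and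
  s0^-(4\<beta>-1).\<close>

lemma rho_eq_normal_density: "rho = normal_density 0 (sqrt 2)"
  by (rule ext) (simp add: rho_def normal_density_def)

lemma rho_pos: "0 < rho y"
  by (simp add: rho_def)

lemma integrable_rho_moment: "integrable lborel (\<lambda>x. rho x * x ^ k)"
  using integrable_normal_moment[where \<mu>=0 and \<sigma>="sqrt 2" and k=k] by (simp add: rho_eq_normal_density)

lemma integral_rho: "(LINT x|lborel. rho x) = 1"
  by (simp add: rho_eq_normal_density)

lemma integral_rho_moment_2: "(LINT x|lborel. rho x * x ^ 2) = 2"
  using integral_normal_moment_even[of "sqrt 2" 0 1] by (simp add: rho_eq_normal_density)

lemma integral_rho_moment_4: "(LINT x|lborel. rho x * x ^ 4) = 12"
  using integral_normal_moment_even[of "sqrt 2" 0 2] by (simp add: rho_eq_normal_density fact_numeral)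

lemma lborel_integral_odd_eq_0:
  fixes f :: "real \<Rightarrow> real"
  assumes "\<And>x. f (- x) = - f x"
  shows "integral\<^sup>L lborel f = 0"
proof -
  have "integral\<^sup>L lborel f = \<bar>-1::real\<bar> *\<^sub>R (LINT x|lborel. f (0 + (-1) * x))"
    by (rule lborel_integral_real_affine) simp
  also have "\<dots> = - integral\<^sup>L lborel f"
    using assms by simp
  finally show ?thesis
    by simp
qed

lemma hpoly_norm_0: "(LINT x|lborel. (hpoly 0 x)^2 * rho x) = 1"
  using integral_rho by (simp add: hpoly_def)

lemma hpoly_norm_1: "(LINT x|lborel. (hpoly 1 x)^2 * rho x) = 2"
  using integral_rho_moment_2 by (simp add: hpoly_def mult.commute)

lemma hpoly_norm_2: "(LINT x|lborel. (hpoly 2 x)^2 * rho x) = 8"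
proof -
  have "(\<lambda>x. (hpoly 2 x)^2 * rho x)
      = (\<lambda>x. rho x * x ^ 4 - 4 * (rho x * x ^ 2) + 4 * rho x)"
    by (auto simp: hpoly_def power2_eq_square power4_eq_xxxx algebra_simps)
  then show ?thesis
    using integrable_rho_moment[of 4] integrable_rho_moment[of 2] integrable_rho_moment[of 0]
    by (simp add: integral_rho integral_rho_moment_2 integral_rho_moment_4)
qed

lemma kpoly_0: "kpoly 0 y = 1"
  unfolding kpoly_def hpoly_norm_0 by (simp add: hpoly_def)

lemma kpoly_1: "kpoly 1 y = y / 2"
  unfolding kpoly_def hpoly_norm_1 by (simp add: hpoly_def)

lemma kpoly_2: "kpoly 2 y = (y^2 - 2) / 8"
  unfolding kpoly_def hpoly_norm_2 by (simp add: hpoly_def)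

lemma cube_weight_bounds:
  fixes y :: real
  shows "\<bar>y\<bar> \<le> 1 + \<bar>y\<bar>^3" and "y^2 \<le> 1 + \<bar>y\<bar>^3"
proof -
  have "\<bar>y\<bar> \<le> 1 + \<bar>y\<bar>^3 \<and> \<bar>y\<bar>^2 \<le> 1 + \<bar>y\<bar>^3"
  proof (cases "\<bar>y\<bar> \<le> 1")
    case True
    then have "\<bar>y\<bar>^2 \<le> 1"
      by (intro power_le_one) auto
    with True show ?thesis
      by (simp add: add_increasing2)
  next
    case False
    have "\<bar>y\<bar> \<le> \<bar>y\<bar>^2"
      using power_increasing[of 1 2 "\<bar>y\<bar>"] False by simp
    moreover have "\<bar>y\<bar>^2 \<le> \<bar>y\<bar>^3"
      using False by (intro power_increasing) auto
    ultimately show ?thesis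
      by (smt (verit) zero_le_power abs_ge_zero)
  qed
  then show "\<bar>y\<bar> \<le> 1 + \<bar>y\<bar>^3" and "y^2 \<le> 1 + \<bar>y\<bar>^3"
    by (simp_all add: power2_abs)
qed

lemma diagonal_scaling_rectangle:
  fixes r1 r2 c :: real
  assumes r1: "0 < r1" and r2: "0 < r2" and c: "0 < c"
  defines "F \<equiv> \<lambda>(x, y). (c / r1 * x, c / r2 * y)"
    and "R \<equiv> cbox (- r1, - r2) (r1, r2)"
    and "Q \<equiv> cbox (- c, - c) (c, c)"
  shows "inj_on F R" and "F ` R = Q" and "F ` frontier R \<subseteq> frontier Q"
    and "boundary_degree F (- r1) (- r2) r1 r2 = 1"
proof -
  have F_Pair: "F (x, y) = (c / r1 * x, c / r2 * y)" for x y
    by (simp add: F_def)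
  have scale_le: "c * x / r \<le> c \<longleftrightarrow> x \<le> r" "- c \<le> c * x / r \<longleftrightarrow> - r \<le> x"
    "c * x / r < c \<longleftrightarrow> x < r" "- c < c * x / r \<longleftrightarrow> - r < x"
    if "0 < r" for r x :: real
  proof -
    have c_div_r_mult: "c * x / r = c * (x / r)"
      by simp
    have "c * t \<le> c \<longleftrightarrow> t \<le> 1" "- c \<le> c * t \<longleftrightarrow> - 1 \<le> t"
      "c * t < c \<longleftrightarrow> t < 1" "- c < c * t \<longleftrightarrow> - 1 < t" for t
      using mult_le_cancel_left_pos[OF c, of t 1] mult_le_cancel_left_pos[OF c, of "- 1" t]
        mult_less_cancel_left_pos[OF c, of t 1] mult_less_cancel_left_pos[OF c, of "- 1" t]
      by auto
    moreover have "x / r \<le> 1 \<longleftrightarrow> x \<le> r" "- 1 \<le> x / r \<longleftrightarrow> - r \<le> x"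
      "x / r < 1 \<longleftrightarrow> x < r" "- 1 < x / r \<longleftrightarrow> - r < x"
      using that by (auto simp: field_simps)
    ultimately show "c * x / r \<le> c \<longleftrightarrow> x \<le> r" "- c \<le> c * x / r \<longleftrightarrow> - r \<le> x"
      "c * x / r < c \<longleftrightarrow> x < r" "- c < c * x / r \<longleftrightarrow> - r < x"
      by (simp_all only: c_div_r_mult)
  qed
  have in_Q: "F z \<in> Q \<longleftrightarrow> z \<in> R" for z
    by (cases z) (simp add: F_Pair Q_def R_def scale_le r1 r2)
  have in_box: "F z \<in> box (- c, - c) (c, c) \<longleftrightarrow> z \<in> box (- r1, - r2) (r1, r2)" for z
    by (cases z) (simp add: F_Pair mem_box Basis_prod_def scale_le r1 r2)
  have F_inverse: "F (r1 / c * fst z, r2 / c * snd z) = z" for z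
    using r1 r2 c by (simp add: F_Pair)
  show "inj_on F R"
    using r1 r2 c by (auto simp: F_def inj_on_def)
  show "F ` R = Q"
    using in_Q F_inverse by (metis image_eqI subsetI subset_antisym image_subsetI)
  have "frontier R = R - box (- r1, - r2) (r1, r2)" and "frontier Q = Q - box (- c, - c) (c, c)"
    by (simp_all add: R_def Q_def frontier_cbox)
  then show "F ` frontier R \<subseteq> frontier Q"
    using in_Q in_box by blast
  define L where "L z = Complex (fst (F (Re z, Im z))) (snd (F (Re z, Im z)))" for z
  have L_linepath: "L \<circ> linepath u v = linepath (L u) (L v)" for u v
    by (rule ext) (simp add: L_def F_Pair linepath_def complex_eq_iff algebra_simps)
  have L_join: "L \<circ> (\<gamma>1 +++ \<gamma>2) = (L \<circ> \<gamma>1) +++ (L \<circ> \<gamma>2)" for \<gamma>1 \<gamma>2 :: "real \<Rightarrow> complex"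
    by (rule ext) (simp add: joinpaths_def)
  have "L \<circ> rectpath (Complex (- r1) (- r2)) (Complex r1 r2) = rectpath (Complex (- c) (- c)) (Complex c c)"
    using r1 r2 by (simp add: rectpath_def Let_def L_join L_linepath) (simp add: L_def F_Pair)
  moreover have "0 \<in> box (Complex (- c) (- c)) (Complex c c)"
    using c by (simp add: in_box_complex_iff)
  ultimately show "boundary_degree F (- r1) (- r2) r1 r2 = 1"
    unfolding boundary_degree_def L_def[symmetric] by (simp add: winding_number_rectpath)
qed

lemma eventually_powr_less:
  fixes X d e :: real
  assumes "e < d"
  shows "\<forall>\<^sub>F s in at_top. X / s powr d < 1 / s powr e"
proof -
  have "((\<lambda>s. X * s powr (e - d)) \<longlongrightarrow> X * 0) at_top"
    using assms by (intro tendsto_mult tendsto_const tendsto_neg_powr filterlim_ident) simp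
  then have "\<forall>\<^sub>F s in at_top. X * s powr (e - d) < 1"
    by (auto dest: order_tendstoD(2)[where a = 1])
  then show ?thesis
    using eventually_gt_at_top[of 0]
    by eventually_elim (simp add: powr_diff field_simps)
qed

lemma admissible_chi0_smooth_extension:
  assumes "admissible_chi0 chi0"
  obtains g M where "\<And>x. g differentiable (at x)" and "\<And>x. 0 \<le> x \<Longrightarrow> g x = chi0 x"
    and "\<And>x. 0 \<le> x \<Longrightarrow> x \<le> 2 \<Longrightarrow> \<bar>deriv g x\<bar> \<le> M"
proof -
  obtain g where smooth: "\<And>n x. ((deriv ^^ n) g) differentiable (at x)"
    and g_eq: "\<And>x. 0 \<le> x \<Longrightarrow> g x = chi0 x"
    using assms unfolding admissible_chi0_def smooth_on_nonneg_def by metis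
  have "continuous_on {0..2} (deriv g)"
    using smooth[of 1] by (simp add: continuous_at_imp_continuous_on differentiable_imp_continuous_within)
  then have "bounded (deriv g ` {0..2})"
    by (intro compact_imp_bounded compact_continuous_image) auto
  then obtain M where "\<forall>x\<in>{0..2}. \<bar>deriv g x\<bar> \<le> M"
    unfolding bounded_iff by auto
  with smooth[of 0] g_eq show ?thesis
    using that[of g M] by auto
qed

text \<open>psi_bounds is (ii)--(iii) for a single \<psi>_{s0,d0,d1}; good_initial_data adds (i), so that
  the proposition states that good_initial_data holds for all large s0.\<close>

definition psi_bounds ::
  "(real \<Rightarrow> real) \<Rightarrow> real \<Rightarrow> real \<Rightarrow> real \<Rightarrow> real \<Rightarrow> real \<Rightarrow> real \<Rightarrow> real \<Rightarrow> real \<Rightarrow> bool"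
  where "psi_bounds chi0 K p gam C A s0 d0 d1 \<longleftrightarrow>
    (let f = psi chi0 K p A s0 d0 d1; a = A / s0 powr (2 * beta p + 1) in
      (\<forall>y. re chi0 K p f s0 y = 0) \<and>
      (\<forall>y. \<bar>rminus chi0 K p f s0 y\<bar> < (1 + \<bar>y\<bar>^3) / s0 powr gam) \<and>
      \<bar>rmode chi0 K p f s0 0\<bar> \<le> a \<and>
      \<bar>rmode chi0 K p f s0 1\<bar> \<le> a \<and>
      \<bar>rmode chi0 K p f s0 2\<bar> < 1 / s0 powr (4 * beta p - 1) \<and>
      f \<in> vartheta chi0 K p gam A s0 \<and>
      (\<forall>y. \<bar>deriv f y\<bar> \<le> C * a) \<and>
      C * a \<le> 1 / s0 powr (gam - 3 * beta p) \<and>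
      (\<forall>y. \<bar>deriv (rminus chi0 K p f s0) y\<bar> \<le> (1 + \<bar>y\<bar>^3) / s0 powr gam))"

definition good_initial_data ::
  "(real \<Rightarrow> real) \<Rightarrow> real \<Rightarrow> real \<Rightarrow> real \<Rightarrow> real \<Rightarrow> real \<Rightarrow> real \<Rightarrow> bool"
  where "good_initial_data chi0 K p gam C A s0 \<longleftrightarrow>
    (let Phi = (\<lambda>(d0, d1). (rmode chi0 K p (psi chi0 K p A s0 d0 d1) s0 0,
                             rmode chi0 K p (psi chi0 K p A s0 d0 d1) s0 1));
         a = A / s0 powr (2 * beta p + 1);
         Q = cbox (- a, - a) (a, a)
     in \<exists>a0 a1 b0 b1. a0 < b0 \<and> a1 < b1 \<and>
          cbox (a0, a1) (b0, b1) \<subseteq> cbox (-2, -2) (2, 2) \<and>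
          inj_on Phi (cbox (a0, a1) (b0, b1)) \<and>
          Phi ` cbox (a0, a1) (b0, b1) = Q \<and>
          Phi ` frontier (cbox (a0, a1) (b0, b1)) \<subseteq> frontier Q \<and>
          boundary_degree Phi a0 a1 b0 b1 = 1 \<and>
          (\<forall>d0 d1. (d0, d1) \<in> cbox (a0, a1) (b0, b1) \<longrightarrow> psi_bounds chi0 K p gam C A s0 d0 d1))"

locale large_time_cutoff =
  fixes chi0 g :: "real \<Rightarrow> real" and K p s M :: real
  assumes admissible: "admissible_chi0 chi0"
    and g_differentiable: "\<And>x. g differentiable (at x)"
    and g_eq_chi0: "\<And>x. 0 \<le> x \<Longrightarrow> g x = chi0 x"
    and deriv_g_bound: "\<And>x. 0 \<le> x \<Longrightarrow> x \<le> 2 \<Longrightarrow> \<bar>deriv g x\<bar> \<le> M"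
    and large_time: "8 \<le> K * s powr beta p"
begin

definition radius :: real where "radius = K * s powr beta p"

abbreviation chi2 :: "real \<Rightarrow> real" where "chi2 y \<equiv> chi0 (\<bar>2 * y\<bar> / radius)"

definition amplitude :: "real \<Rightarrow> real" where "amplitude A = A / s powr (2 * beta p + 1)"

lemma radius_ge_8: "8 \<le> radius"
  using large_time by (simp add: radius_def)

lemma radius_pos: "0 < radius"
  using radius_ge_8 by linarith

lemma s_powr_pos: "0 < s powr e"
  using large_time by (auto simp: powr_def split: if_splits)

lemma cutoff_eq: "cutoff chi0 K p y s = chi0 (\<bar>y\<bar> / radius)"
  by (simp add: cutoff_def radius_def)

lemma M_nonneg: "0 \<le> M"
  using deriv_g_bound[of 0] by simp

lemma chi0_bounds:
  "0 \<le> x \<Longrightarrow> 0 \<le> chi0 x" "0 \<le> x \<Longrightarrow> chi0 x \<le> 1"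
  "0 \<le> x \<Longrightarrow> x \<le> 1 \<Longrightarrow> chi0 x = 1" "2 < x \<Longrightarrow> chi0 x = 0"
  using admissible unfolding admissible_chi0_def by auto

lemma chi2_nonneg: "0 \<le> chi2 y"
  using chi0_bounds(1) radius_pos by simp

lemma chi2_le_1: "chi2 y \<le> 1"
  using chi0_bounds(2) radius_pos by simp

lemma abs_chi2_le_1: "\<bar>chi2 y\<bar> \<le> 1"
  by (simp only: abs_of_nonneg[OF chi2_nonneg] chi2_le_1)

lemma chi2_eq_1: "\<bar>y\<bar> \<le> radius / 2 \<Longrightarrow> chi2 y = 1"
  using chi0_bounds(3)[of "\<bar>2 * y\<bar> / radius"] radius_pos by (simp add: field_simps)

lemma chi2_eq_0: "radius < \<bar>y\<bar> \<Longrightarrow> chi2 y = 0"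
  using chi0_bounds(4)[of "\<bar>2 * y\<bar> / radius"] radius_pos by (simp add: field_simps)

lemma continuous_on_chi2: "continuous_on UNIV chi2"
proof -
  have "continuous_on UNIV g"
    using g_differentiable
    by (simp add: continuous_at_imp_continuous_on differentiable_imp_continuous_within)
  then have "continuous_on UNIV (\<lambda>y. g (\<bar>2 * y\<bar> / radius))"
    by (rule continuous_on_compose2) (use radius_pos in \<open>auto intro!: continuous_intros\<close>)
  then show ?thesis
    using g_eq_chi0 radius_pos by simp
qed

lemma chi2_measurable [measurable]: "chi2 \<in> borel_measurable lborel"
  using borel_measurable_continuous_onI[OF continuous_on_chi2] by simp

lemma chi2_has_derivative_nonzero:
  assumes "y \<noteq> 0"
  shows "(chi2 has_real_derivative deriv g (2 * \<bar>y\<bar> / radius) * (2 * sgn y / radius)) (at y)"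
proof -
  define \<sigma> where "\<sigma> = sgn y"
  have \<sigma>: "\<sigma> * y = \<bar>y\<bar>" "\<bar>\<sigma>\<bar> = 1"
    using assms by (auto simp: \<sigma>_def sgn_mult_abs abs_sgn)
  have g_on_side: "g (2 * \<sigma> * x / radius) = chi2 x" if "0 < \<sigma> * x" for x
  proof -
    have "\<bar>2 * x\<bar> = 2 * \<sigma> * x"
      using that \<sigma>(2) by (auto simp: abs_if \<sigma>_def sgn_if split: if_splits)
    moreover have "0 \<le> 2 * \<sigma> * x / radius"
      using that radius_pos by (simp add: mult.assoc zero_le_divide_iff)
    ultimately show ?thesis
      using g_eq_chi0 by simp
  qed
  have "((\<lambda>x. g (2 * \<sigma> * x / radius)) has_real_derivative
        deriv g (2 * \<sigma> * y / radius) * (2 * \<sigma> / radius)) (at y)"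
    using g_differentiable radius_pos
    by (intro DERIV_chain2[of g] derivative_eq_intros) (auto simp: DERIV_deriv_iff_real_differentiable)
  then have "(chi2 has_real_derivative deriv g (2 * \<sigma> * y / radius) * (2 * \<sigma> / radius)) (at y)"
    by (rule has_field_derivative_transform_within_open[where S = "{x. 0 < \<sigma> * x}"])
      (use assms \<sigma> g_on_side in \<open>auto intro!: open_Collect_less continuous_intros\<close>)
  then show ?thesis
    using \<sigma>(1) by (simp add: \<sigma>_def mult.assoc)
qed

lemma chi2_has_derivative:
  obtains D where "(chi2 has_real_derivative D) (at y)" and "\<bar>D\<bar> \<le> 2 * M / radius"
    and "radius < \<bar>y\<bar> \<Longrightarrow> D = 0"
proof -
  have bound_0: "\<bar>0\<bar> \<le> 2 * M / radius"
    using M_nonneg radius_pos by simp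
  consider "\<bar>y\<bar> < radius / 2" | "radius < \<bar>y\<bar>" | "0 < \<bar>y\<bar>" "\<bar>y\<bar> \<le> radius"
    using radius_pos by linarith
  then show ?thesis
  proof cases
    case 1
    have "(chi2 has_real_derivative 0) (at y)"
      by (rule has_field_derivative_transform_within_open[of "\<lambda>_. 1" _ _ "ball 0 (radius / 2)"])
        (use 1 chi2_eq_1 in auto)
    with that bound_0 show ?thesis
      by blast
  next
    case 2
    have "(chi2 has_real_derivative 0) (at y)"
      by (rule has_field_derivative_transform_within_open[of "\<lambda>_. 0" _ _ "- cball 0 radius"])
        (use 2 chi2_eq_0 in auto)
    with that bound_0 show ?thesis
      by blast
  next
    case 3
    have deriv_le: "\<bar>deriv g (2 * \<bar>y\<bar> / radius)\<bar> \<le> M"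
      using 3 radius_pos by (intro deriv_g_bound) (auto simp: field_simps)
    have abs_factor: "\<bar>2 * sgn y / radius\<bar> = 2 / radius"
      using 3 radius_pos by (simp add: abs_mult)
    have "\<bar>deriv g (2 * \<bar>y\<bar> / radius) * (2 * sgn y / radius)\<bar> \<le> M * (2 / radius)"
      unfolding abs_mult[of "deriv g _"] abs_factor using deriv_le radius_pos
      by (intro mult_right_mono) auto
    with chi2_has_derivative_nonzero[of y] that 3 show ?thesis
      by (auto simp: mult.commute)
  qed
qed

lemma cutoff_mult_chi2: "cutoff chi0 K p y s * chi2 y = chi2 y"
proof (cases "radius < \<bar>y\<bar>")
  case True
  then show ?thesis
    using chi2_eq_0 by simp
next
  case False
  then show ?thesis
    using chi0_bounds(3)[of "\<bar>y\<bar> / radius"] radius_pos by (simp add: cutoff_eq)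
qed

lemma psi_eq: "psi chi0 K p A s d0 d1 y = amplitude A * (d0 + d1 * y) * chi2 y"
  by (simp add: psi_def cutoff_eq amplitude_def)

lemma rb_psi: "rb chi0 K p (psi chi0 K p A s d0 d1) s y = psi chi0 K p A s d0 d1 y"
  using cutoff_mult_chi2[of y] by (simp add: rb_def psi_eq mult_ac)

lemma re_psi: "re chi0 K p (psi chi0 K p A s d0 d1) s y = 0"
  using rb_psi[of A d0 d1 y] by (simp add: re_def rb_def algebra_simps)

definition moment :: "nat \<Rightarrow> real" where
  "moment k = (LINT y|lborel. chi2 y * y ^ k * rho y)"

lemma integrable_chi2_moment: "integrable lborel (\<lambda>y. chi2 y * y ^ k * rho y)"
proof (rule Bochner_Integration.integrable_bound[OF integrable_rho_moment[of k]])
  show "(\<lambda>y. chi2 y * y ^ k * rho y) \<in> borel_measurable lborel"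
    unfolding rho_def by measurable
  show "AE y in lborel. norm (chi2 y * y ^ k * rho y) \<le> norm (rho y * y ^ k)"
  proof (rule AE_I2)
    fix y
    have "norm (chi2 y * y ^ k * rho y) = chi2 y * norm (rho y * y ^ k)"
      using chi2_nonneg[of y] by (simp add: abs_mult mult_ac)
    also have "\<dots> \<le> norm (rho y * y ^ k)"
      using chi2_nonneg[of y] chi2_le_1[of y] by (intro mult_left_le_one_le) auto
    finally show "norm (chi2 y * y ^ k * rho y) \<le> norm (rho y * y ^ k)" .
  qed
qed

lemma moment_odd: "odd k \<Longrightarrow> moment k = 0"
  unfolding moment_def by (rule lborel_integral_odd_eq_0) (simp add: rho_def)

lemma moment_le:
  assumes "even k"
  shows "moment k \<le> (LINT y|lborel. rho y * y ^ k)"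
  unfolding moment_def
proof (intro integral_mono integrable_chi2_moment integrable_rho_moment)
  fix y
  have "0 \<le> rho y * y ^ k"
    using assms rho_pos[of y] by (simp add: zero_le_even_power)
  then have "chi2 y * (rho y * y ^ k) \<le> rho y * y ^ k"
    using chi2_nonneg[of y] chi2_le_1[of y] by (intro mult_left_le_one_le) auto
  then show "chi2 y * y ^ k * rho y \<le> rho y * y ^ k"
    by (simp add: mult_ac)
qed

lemma moment_ge:
  assumes "even k"
  shows "(LINT y|lborel. rho y * y ^ k) - 4 / radius^2 * (LINT y|lborel. rho y * y ^ (k + 2))
    \<le> moment k"
proof -
  have pointwise: "rho y * y ^ k - 4 / radius^2 * (rho y * y ^ (k + 2)) \<le> chi2 y * y ^ k * rho y"
    for y
  proof (cases "\<bar>y\<bar> \<le> radius / 2")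
    case True
    have "0 \<le> 4 / radius^2 * (rho y * y ^ (k + 2))"
      using assms rho_pos[of y] by (intro mult_nonneg_nonneg zero_le_even_power) auto
    moreover have "chi2 y * y ^ k * rho y = rho y * y ^ k"
      using True chi2_eq_1 by simp
    ultimately show ?thesis
      by linarith
  next
    case False
    then have "radius^2 \<le> (2 * \<bar>y\<bar>)^2"
      using radius_pos by (intro power_mono) auto
    then have "1 \<le> 4 / radius^2 * y^2"
      using radius_pos by (simp add: field_simps power_mult_distrib)
    then have "rho y * y ^ k * 1 \<le> rho y * y ^ k * (4 / radius^2 * y^2)"
      using assms rho_pos[of y] by (intro mult_left_mono) (simp_all add: zero_le_even_power)
    also have "\<dots> = 4 / radius^2 * (rho y * y ^ (k + 2))"
      by (simp add: power_add power2_eq_square mult_ac)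
    finally have "rho y * y ^ k \<le> 4 / radius^2 * (rho y * y ^ (k + 2))"
      by simp
    moreover have "0 \<le> chi2 y * y ^ k * rho y"
      using assms chi2_nonneg[of y] rho_pos[of y] by (simp add: zero_le_even_power)
    ultimately show ?thesis
      by linarith
  qed
  have "(LINT y|lborel. rho y * y ^ k - 4 / radius^2 * (rho y * y ^ (k + 2))) \<le> moment k"
    unfolding moment_def using pointwise
    by (intro integral_mono integrable_chi2_moment Bochner_Integration.integrable_diff
        integrable_mult_right integrable_rho_moment)
  moreover have "(LINT y|lborel. rho y * y ^ k - 4 / radius^2 * (rho y * y ^ (k + 2)))
      = (LINT y|lborel. rho y * y ^ k) - 4 / radius^2 * (LINT y|lborel. rho y * y ^ (k + 2))"
    using integrable_rho_moment[of k] integrable_rho_moment[of "k + 2"]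
    by (simp only: Bochner_Integration.integral_diff integrable_mult_right integral_mult_right_zero)
  ultimately show ?thesis
    by simp
qed

lemma moment_0_bounds: "1 / 2 \<le> moment 0" "moment 0 \<le> 1"
proof -
  have "64 \<le> radius^2"
    using power_mono[OF radius_ge_8, of 2] by simp
  then have "4 / radius^2 * 2 \<le> 1 / 2"
    using radius_pos by (simp add: field_simps)
  moreover have "1 - 4 / radius^2 * 2 \<le> moment 0"
    using moment_ge[of 0]
    by (simp only: add_0 power_0 mult_1_right integral_rho integral_rho_moment_2) simp
  ultimately show "1 / 2 \<le> moment 0"
    by linarith
  show "moment 0 \<le> 1"
    using moment_le[of 0] by (simp add: integral_rho)
qed

lemma moment_2_bounds: "1 \<le> moment 2" "moment 2 \<le> 2"
proof -
  have "64 \<le> radius^2"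
    using power_mono[OF radius_ge_8, of 2] by simp
  then have "4 / radius^2 * 12 \<le> 1"
    using radius_pos by (simp add: field_simps)
  moreover have "2 - 4 / radius^2 * 12 \<le> moment 2"
    using moment_ge[of 2]
    by (simp only: numeral_plus_numeral semiring_norm integral_rho_moment_2 integral_rho_moment_4) simp
  ultimately show "1 \<le> moment 2"
    by linarith
  show "moment 2 \<le> 2"
    using moment_le[of 2] by (simp add: integral_rho_moment_2)
qed

lemma integral_cubic_chi2:
  "(LINT y|lborel. (b0 + b1 * y + b2 * y^2 + b3 * y^3) * chi2 y * rho y)
    = b0 * moment 0 + b1 * moment 1 + b2 * moment 2 + b3 * moment 3"
proof -
  have int: "integrable lborel (\<lambda>y. c * (chi2 y * y ^ k * rho y))" for c k
    by (intro integrable_mult_right integrable_chi2_moment)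
  have "(LINT y|lborel. (b0 + b1 * y + b2 * y^2 + b3 * y^3) * chi2 y * rho y)
      = (LINT y|lborel. b0 * (chi2 y * y ^ 0 * rho y) + b1 * (chi2 y * y ^ 1 * rho y)
           + b2 * (chi2 y * y ^ 2 * rho y) + b3 * (chi2 y * y ^ 3 * rho y))"
    by (intro Bochner_Integration.integral_cong) (simp_all add: algebra_simps)
  also have "\<dots> = b0 * moment 0 + b1 * moment 1 + b2 * moment 2 + b3 * moment 3"
    unfolding moment_def using int
    by (simp only: Bochner_Integration.integral_add Bochner_Integration.integrable_add
        integral_mult_right_zero)
  finally show ?thesis .
qed

lemma rmode_psi_eq:
  "rmode chi0 K p (psi chi0 K p A s d0 d1) s m
    = (LINT y|lborel. amplitude A * (d0 + d1 * y) * kpoly m y * chi2 y * rho y)"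
  unfolding rmode_def rb_psi psi_eq by (simp add: mult_ac)

lemma rmode_psi_0: "rmode chi0 K p (psi chi0 K p A s d0 d1) s 0 = amplitude A * moment 0 * d0"
proof -
  have "rmode chi0 K p (psi chi0 K p A s d0 d1) s 0
      = (LINT y|lborel. (amplitude A * d0 + amplitude A * d1 * y + 0 * y^2 + 0 * y^3) * chi2 y * rho y)"
    unfolding rmode_psi_eq kpoly_0
    by (intro Bochner_Integration.integral_cong)
      (simp_all add: algebra_simps add_divide_distrib diff_divide_distrib)
  then show ?thesis
    by (simp only: integral_cubic_chi2) (simp add: moment_odd)
qed

lemma rmode_psi_1: "rmode chi0 K p (psi chi0 K p A s d0 d1) s 1 = amplitude A * (moment 2 / 2) * d1"
proof -
  have "rmode chi0 K p (psi chi0 K p A s d0 d1) s 1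
      = (LINT y|lborel. (0 + amplitude A * d0 / 2 * y + amplitude A * d1 / 2 * y^2 + 0 * y^3) * chi2 y * rho y)"
    unfolding rmode_psi_eq kpoly_1
    by (intro Bochner_Integration.integral_cong)
      (simp_all add: algebra_simps add_divide_distrib diff_divide_distrib power2_eq_square)
  then show ?thesis
    by (simp only: integral_cubic_chi2) (simp add: moment_odd)
qed

lemma rmode_psi_2:
  "rmode chi0 K p (psi chi0 K p A s d0 d1) s 2 = amplitude A * ((moment 2 - 2 * moment 0) / 8) * d0"
proof -
  have "rmode chi0 K p (psi chi0 K p A s d0 d1) s 2
      = (LINT y|lborel. (- amplitude A * d0 / 4 + - amplitude A * d1 / 4 * y + amplitude A * d0 / 8 * y^2
          + amplitude A * d1 / 8 * y^3) * chi2 y * rho y)"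
    unfolding rmode_psi_eq kpoly_2
    by (intro Bochner_Integration.integral_cong)
      (simp_all add: algebra_simps add_divide_distrib diff_divide_distrib power2_eq_square power3_eq_cube)
  then show ?thesis
    by (simp only: integral_cubic_chi2) (simp add: moment_odd algebra_simps)
qed

lemma rminus_psi_eq:
  "rminus chi0 K p (psi chi0 K p A s d0 d1) s y
    = psi chi0 K p A s d0 d1 y - (rmode chi0 K p (psi chi0 K p A s d0 d1) s 0
       + rmode chi0 K p (psi chi0 K p A s d0 d1) s 1 * y
       + rmode chi0 K p (psi chi0 K p A s d0 d1) s 2 * (y^2 - 2))"
  by (simp add: rminus_def rb_psi numeral_2_eq_2 hpoly_def)

lemma amplitude_nonneg: "0 \<le> A \<Longrightarrow> 0 \<le> amplitude A"
  using s_powr_pos by (simp add: amplitude_def)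

context
  fixes A d0 d1 :: real
  assumes A_nonneg: "0 \<le> A" and abs_d0_le_2: "\<bar>d0\<bar> \<le> 2" and abs_d1_le_2: "\<bar>d1\<bar> \<le> 2"
begin

lemma abs_linear_le: "\<bar>d0 + d1 * y\<bar> \<le> 2 + 2 * \<bar>y\<bar>"
proof -
  have "\<bar>d1 * y\<bar> \<le> 2 * \<bar>y\<bar>"
    using abs_d1_le_2 by (simp add: abs_mult mult_right_mono)
  then show ?thesis
    using abs_d0_le_2 abs_triangle_ineq[of d0 "d1 * y"] by linarith
qed

lemma abs_psi_le: "\<bar>psi chi0 K p A s d0 d1 y\<bar> \<le> amplitude A * (2 + 2 * \<bar>y\<bar>)"
proof -
  have "\<bar>(d0 + d1 * y) * chi2 y\<bar> \<le> (2 + 2 * \<bar>y\<bar>) * 1"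
    unfolding abs_mult[of "d0 + d1 * y"] by (intro mult_mono abs_linear_le abs_chi2_le_1) auto
  then have "amplitude A * \<bar>(d0 + d1 * y) * chi2 y\<bar> \<le> amplitude A * (2 + 2 * \<bar>y\<bar>)"
    using amplitude_nonneg[OF A_nonneg] by (simp add: mult_left_mono)
  then show ?thesis
    using amplitude_nonneg[OF A_nonneg] by (simp add: psi_eq abs_mult mult.assoc)
qed

lemma abs_rmode_psi_2_le: "\<bar>rmode chi0 K p (psi chi0 K p A s d0 d1) s 2\<bar> \<le> amplitude A / 4"
proof -
  have "\<bar>(moment 2 - 2 * moment 0) / 8 * d0\<bar> \<le> 1 / 8 * 2"
    unfolding abs_mult using moment_0_bounds moment_2_bounds abs_d0_le_2
    by (intro mult_mono) auto
  then have "amplitude A * \<bar>(moment 2 - 2 * moment 0) / 8 * d0\<bar> \<le> amplitude A * (1 / 8 * 2)"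
    using amplitude_nonneg[OF A_nonneg] by (intro mult_left_mono)
  then show ?thesis
    using amplitude_nonneg[OF A_nonneg] by (simp add: rmode_psi_2 abs_mult mult.assoc)
qed

lemma abs_chi2_deriv_mult_le:
  assumes "\<bar>Dc\<bar> \<le> 2 * M / radius" and "radius < \<bar>y\<bar> \<Longrightarrow> Dc = 0"
  shows "\<bar>Dc * (d0 + d1 * y)\<bar> \<le> 5 * M"
proof (cases "radius < \<bar>y\<bar>")
  case True
  then show ?thesis
    using assms(2) M_nonneg by simp
next
  case False
  then have "\<bar>Dc * (d0 + d1 * y)\<bar> \<le> 2 * M / radius * (2 + 2 * radius)"
    unfolding abs_mult using assms(1) abs_linear_le[of y] M_nonneg radius_pos
    by (intro mult_mono) auto
  also have "\<dots> = 4 * M / radius + 4 * M"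
    using radius_pos by (simp add: field_simps)
  also have "4 * M / radius \<le> M"
    using radius_ge_8 M_nonneg by (simp add: field_simps mult_left_mono)
  finally show ?thesis
    by simp
qed

lemma psi_has_derivative:
  obtains D where "(psi chi0 K p A s d0 d1 has_real_derivative D) (at y)"
    and "\<bar>D\<bar> \<le> (2 + 5 * M) * amplitude A"
proof -
  obtain Dc where Dc: "(chi2 has_real_derivative Dc) (at y)" "\<bar>Dc\<bar> \<le> 2 * M / radius"
    "radius < \<bar>y\<bar> \<Longrightarrow> Dc = 0"
    using chi2_has_derivative by blast
  have "((\<lambda>y. amplitude A * (d0 + d1 * y)) has_real_derivative amplitude A * d1) (at y)"
    by (auto intro!: derivative_eq_intros)
  from DERIV_mult[OF this Dc(1)]
  have "(psi chi0 K p A s d0 d1 has_real_derivative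
      amplitude A * (d1 * chi2 y + Dc * (d0 + d1 * y))) (at y)"
    by (simp add: psi_eq[abs_def] algebra_simps)
  moreover have "\<bar>d1 * chi2 y + Dc * (d0 + d1 * y)\<bar> \<le> 2 + 5 * M"
  proof -
    have "\<bar>d1 * chi2 y\<bar> \<le> 2 * 1"
      unfolding abs_mult[of d1] by (intro mult_mono abs_d1_le_2 abs_chi2_le_1) auto
    then show ?thesis
      using abs_chi2_deriv_mult_le[where y = y, OF Dc(2,3)] abs_triangle_ineq[of "d1 * chi2 y"] by linarith
  qed
  then have "\<bar>amplitude A * (d1 * chi2 y + Dc * (d0 + d1 * y))\<bar> \<le> (2 + 5 * M) * amplitude A"
    using amplitude_nonneg[OF A_nonneg] by (simp add: abs_mult mult_left_mono mult.commute)
  ultimately show ?thesis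
    using that by blast
qed

lemma Linfty_psi: "Linfty (psi chi0 K p A s d0 d1)"
proof -
  have "\<bar>psi chi0 K p A s d0 d1 y\<bar> \<le> amplitude A * (2 + 2 * radius)" for y
  proof (cases "radius < \<bar>y\<bar>")
    case True
    then show ?thesis
      using amplitude_nonneg[OF A_nonneg] radius_pos by (simp add: psi_eq chi2_eq_0)
  next
    case False
    then have "amplitude A * (2 + 2 * \<bar>y\<bar>) \<le> amplitude A * (2 + 2 * radius)"
      using amplitude_nonneg[OF A_nonneg] by (intro mult_left_mono) auto
    then show ?thesis
      using abs_psi_le[of y] by linarith
  qed
  moreover have "psi chi0 K p A s d0 d1 \<in> borel_measurable lborel"
    unfolding psi_eq[abs_def] by measurable
  ultimately show ?thesis
    unfolding Linfty_def by blast
qed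

lemma abs_rminus_psi_le:
  assumes m0: "\<bar>rmode chi0 K p (psi chi0 K p A s d0 d1) s 0\<bar> \<le> amplitude A"
    and m1: "\<bar>rmode chi0 K p (psi chi0 K p A s d0 d1) s 1\<bar> \<le> amplitude A"
  shows "\<bar>rminus chi0 K p (psi chi0 K p A s d0 d1) s y\<bar> \<le> 7 * amplitude A * (1 + \<bar>y\<bar>^3)"
proof -
  let ?m = "rmode chi0 K p (psi chi0 K p A s d0 d1) s"
  have "\<bar>?m 1\<bar> * \<bar>y\<bar> \<le> amplitude A * \<bar>y\<bar>"
    using m1 by (rule mult_right_mono) simp
  moreover have "\<bar>?m 2\<bar> * \<bar>y^2 - 2\<bar> \<le> amplitude A / 4 * (y^2 + 2)"
    using amplitude_nonneg[OF A_nonneg] by (intro mult_mono abs_rmode_psi_2_le) (auto simp: abs_le_iff)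
  moreover have "\<bar>rminus chi0 K p (psi chi0 K p A s d0 d1) s y\<bar>
      \<le> \<bar>psi chi0 K p A s d0 d1 y\<bar> + \<bar>?m 0\<bar> + \<bar>?m 1\<bar> * \<bar>y\<bar> + \<bar>?m 2\<bar> * \<bar>y^2 - 2\<bar>"
    unfolding rminus_psi_eq abs_mult[symmetric] by arith
  ultimately have "\<bar>rminus chi0 K p (psi chi0 K p A s d0 d1) s y\<bar>
      \<le> amplitude A * (2 + 2 * \<bar>y\<bar>) + amplitude A + amplitude A * \<bar>y\<bar> + amplitude A / 4 * (y^2 + 2)"
    using abs_psi_le[of y] m0 by linarith
  also have "\<dots> = amplitude A * (7 / 2 + 3 * \<bar>y\<bar> + y^2 / 4)"
    by (simp add: field_simps)
  also have "\<dots> \<le> amplitude A * (7 + 7 * \<bar>y\<bar>^3)"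
  proof (rule mult_left_mono)
    have "0 \<le> \<bar>y\<bar>^3"
      by simp
    then show "7 / 2 + 3 * \<bar>y\<bar> + y^2 / 4 \<le> 7 + 7 * \<bar>y\<bar>^3"
      using cube_weight_bounds[of y] by linarith
  qed (rule amplitude_nonneg[OF A_nonneg])
  finally show ?thesis
    by (simp add: algebra_simps)
qed

lemma abs_deriv_psi_le: "\<bar>deriv (psi chi0 K p A s d0 d1) y\<bar> \<le> (2 + 5 * M) * amplitude A"
  using psi_has_derivative by (metis DERIV_imp_deriv)

lemma abs_deriv_rminus_psi_le:
  assumes m1: "\<bar>rmode chi0 K p (psi chi0 K p A s d0 d1) s 1\<bar> \<le> amplitude A"
  shows "\<bar>deriv (rminus chi0 K p (psi chi0 K p A s d0 d1) s) y\<bar>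
    \<le> (4 + 5 * M) * amplitude A * (1 + \<bar>y\<bar>^3)"
proof -
  let ?m = "rmode chi0 K p (psi chi0 K p A s d0 d1) s"
  obtain D where D: "(psi chi0 K p A s d0 d1 has_real_derivative D) (at y)"
    "\<bar>D\<bar> \<le> (2 + 5 * M) * amplitude A"
    using psi_has_derivative by blast
  have "(rminus chi0 K p (psi chi0 K p A s d0 d1) s has_real_derivative D - (?m 1 + ?m 2 * (2 * y))) (at y)"
    unfolding rminus_psi_eq[abs_def] using D(1) by (auto intro!: derivative_eq_intros)
  then have "deriv (rminus chi0 K p (psi chi0 K p A s d0 d1) s) y = D - (?m 1 + ?m 2 * (2 * y))"
    by (rule DERIV_imp_deriv)
  moreover have "\<bar>?m 2 * (2 * y)\<bar> \<le> amplitude A / 4 * (2 * \<bar>y\<bar>)"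
    unfolding abs_mult[of "?m 2"] using amplitude_nonneg[OF A_nonneg] by (intro mult_mono abs_rmode_psi_2_le) auto
  ultimately have "\<bar>deriv (rminus chi0 K p (psi chi0 K p A s d0 d1) s) y\<bar>
      \<le> (2 + 5 * M) * amplitude A + amplitude A + amplitude A / 4 * (2 * \<bar>y\<bar>)"
    using D(2) m1 by linarith
  also have "\<dots> = amplitude A * ((3 + 5 * M) + \<bar>y\<bar> / 2)"
    by (simp add: algebra_simps)
  also have "\<dots> \<le> amplitude A * ((4 + 5 * M) * (1 + \<bar>y\<bar>^3))"
  proof (rule mult_left_mono)
    have "(3 + 5 * M) * 1 \<le> (3 + 5 * M) * (1 + \<bar>y\<bar>^3)"
      using M_nonneg by (intro mult_left_mono) auto
    then show "(3 + 5 * M) + \<bar>y\<bar> / 2 \<le> (4 + 5 * M) * (1 + \<bar>y\<bar>^3)"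
      using cube_weight_bounds(1)[of y] by (simp add: algebra_simps)
  qed (rule amplitude_nonneg[OF A_nonneg])
  finally show ?thesis
    by (simp add: mult_ac)
qed

lemma psi_in_vartheta:
  assumes A: "1 \<le> A"
    and rminus: "\<And>y. \<bar>rminus chi0 K p (psi chi0 K p A s d0 d1) s y\<bar> < (1 + \<bar>y\<bar>^3) / s powr gam"
    and m0: "\<bar>rmode chi0 K p (psi chi0 K p A s d0 d1) s 0\<bar> \<le> amplitude A"
    and m1: "\<bar>rmode chi0 K p (psi chi0 K p A s d0 d1) s 1\<bar> \<le> amplitude A"
    and m2: "\<bar>rmode chi0 K p (psi chi0 K p A s d0 d1) s 2\<bar> < 1 / s powr (4 * beta p - 1)"
  shows "psi chi0 K p A s d0 d1 \<in> vartheta chi0 K p gam A s"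
  unfolding vartheta_def mem_Collect_eq
proof (intro conjI AE_I2)
  show "Linfty (psi chi0 K p A s d0 d1)"
    by (rule Linfty_psi)
  show "\<bar>re chi0 K p (psi chi0 K p A s d0 d1) s y\<bar> \<le> A^2 * s powr - (gam - 3 * beta p)" for y
    by (simp add: re_psi)
  show "\<bar>rminus chi0 K p (psi chi0 K p A s d0 d1) s y\<bar> / (1 + \<bar>y\<bar>^3) \<le> A * s powr - gam" for y
  proof -
    have "0 < 1 + \<bar>y\<bar>^3"
      by (simp add: add_pos_nonneg)
    then have "\<bar>rminus chi0 K p (psi chi0 K p A s d0 d1) s y\<bar> / (1 + \<bar>y\<bar>^3) \<le> 1 / s powr gam"
      using rminus[of y] by (simp add: field_simps)
    also have "\<dots> \<le> A / s powr gam"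
      using A s_powr_pos by (intro divide_right_mono) auto
    finally show ?thesis
      by (simp add: powr_minus_divide)
  qed
  show "\<bar>rmode chi0 K p (psi chi0 K p A s d0 d1) s 0\<bar> \<le> A * s powr - (2 * beta p + 1)"
    and "\<bar>rmode chi0 K p (psi chi0 K p A s d0 d1) s 1\<bar> \<le> A * s powr - (2 * beta p + 1)"
    using m0 m1 unfolding powr_minus_divide amplitude_def by simp_all
  have "1 / s powr (4 * beta p - 1) \<le> sqrt A / s powr (4 * beta p - 1)"
    using A s_powr_pos by (intro divide_right_mono) auto
  then show "\<bar>rmode chi0 K p (psi chi0 K p A s d0 d1) s 2\<bar> \<le> sqrt A * s powr - (4 * beta p - 1)"
    using m2 unfolding powr_minus_divide by simp
qed

lemma psi_bounds_if_small_amplitude: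
  assumes A: "1 \<le> A"
    and m0: "\<bar>rmode chi0 K p (psi chi0 K p A s d0 d1) s 0\<bar> \<le> amplitude A"
    and m1: "\<bar>rmode chi0 K p (psi chi0 K p A s d0 d1) s 1\<bar> \<le> amplitude A"
    and small_rminus: "(7 + 5 * M) * amplitude A < 1 / s powr gam"
    and small_mode_2: "amplitude A < 1 / s powr (4 * beta p - 1)"
    and small_deriv: "(7 + 5 * M) * amplitude A \<le> 1 / s powr (gam - 3 * beta p)"
  shows "psi_bounds chi0 K p gam (7 + 5 * M) A s d0 d1"
proof -
  have C_mono: "c * amplitude A * (1 + \<bar>y\<bar>^3) < (1 + \<bar>y\<bar>^3) / s powr gam"
    if "c \<le> 7 + 5 * M" for c y
  proof -
    have "c * amplitude A * (1 + \<bar>y\<bar>^3) \<le> (7 + 5 * M) * amplitude A * (1 + \<bar>y\<bar>^3)"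
      using that amplitude_nonneg[OF A_nonneg] by (intro mult_right_mono) auto
    also have "\<dots> < 1 / s powr gam * (1 + \<bar>y\<bar>^3)"
      using small_rminus by (intro mult_strict_right_mono) (auto simp: add_pos_nonneg)
    finally show ?thesis
      by simp
  qed
  have rminus: "\<bar>rminus chi0 K p (psi chi0 K p A s d0 d1) s y\<bar> < (1 + \<bar>y\<bar>^3) / s powr gam" for y
    using abs_rminus_psi_le[OF m0 m1, of y] C_mono[of 7 y] M_nonneg by linarith
  have deriv_rminus:
    "\<bar>deriv (rminus chi0 K p (psi chi0 K p A s d0 d1) s) y\<bar> \<le> (1 + \<bar>y\<bar>^3) / s powr gam" for y
    using abs_deriv_rminus_psi_le[OF m1, of y] C_mono[of "4 + 5 * M" y] by linarith
  have deriv_psi: "\<bar>deriv (psi chi0 K p A s d0 d1) y\<bar> \<le> (7 + 5 * M) * amplitude A" for y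
    using abs_deriv_psi_le[of y] amplitude_nonneg[OF A_nonneg] by (smt (verit) mult_right_mono)
  have m2: "\<bar>rmode chi0 K p (psi chi0 K p A s d0 d1) s 2\<bar> < 1 / s powr (4 * beta p - 1)"
    using abs_rmode_psi_2_le amplitude_nonneg[OF A_nonneg] small_mode_2 by linarith
  show ?thesis
    unfolding psi_bounds_def Let_def amplitude_def[symmetric]
    using re_psi rminus m0 m1 m2 psi_in_vartheta[OF A rminus m0 m1 m2] deriv_psi small_deriv
      deriv_rminus by blast
qed

end

lemma rmode_psi_map_eq:
  "(\<lambda>(d0, d1). (rmode chi0 K p (psi chi0 K p A s d0 d1) s 0, rmode chi0 K p (psi chi0 K p A s d0 d1) s 1))
    = (\<lambda>(d0, d1). (amplitude A / (1 / moment 0) * d0, amplitude A / (2 / moment 2) * d1))"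
  unfolding rmode_psi_0 rmode_psi_1 by (simp add: fun_eq_iff)

lemma psi_bounds_on_rectangle:
  assumes A: "1 \<le> A"
    and small: "(7 + 5 * M) * amplitude A < 1 / s powr gam"
      "amplitude A < 1 / s powr (4 * beta p - 1)"
      "(7 + 5 * M) * amplitude A \<le> 1 / s powr (gam - 3 * beta p)"
    and d: "(d0, d1) \<in> cbox (- (1 / moment 0), - (2 / moment 2)) (1 / moment 0, 2 / moment 2)"
  shows "psi_bounds chi0 K p gam (7 + 5 * M) A s d0 d1"
proof (rule psi_bounds_if_small_amplitude[OF _ _ _ A _ _ small])
  have J: "0 < moment 0" "moment 0 * (1 / moment 0) = 1" "0 < moment 2" "moment 2 / 2 * (2 / moment 2) = 1"
    using moment_0_bounds moment_2_bounds by auto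
  have d_le: "\<bar>d0\<bar> \<le> 1 / moment 0" "\<bar>d1\<bar> \<le> 2 / moment 2"
    using d by (auto simp: abs_le_iff)
  moreover have "1 / moment 0 \<le> 2" "2 / moment 2 \<le> 2"
    using moment_0_bounds moment_2_bounds by (auto simp: field_simps)
  ultimately show "\<bar>d0\<bar> \<le> 2" "\<bar>d1\<bar> \<le> 2"
    by linarith+
  show "0 \<le> A"
    using A by simp
  have "moment 0 * \<bar>d0\<bar> \<le> 1" "moment 2 / 2 * \<bar>d1\<bar> \<le> 1"
    using mult_left_mono[OF d_le(1), of "moment 0"] mult_left_mono[OF d_le(2), of "moment 2 / 2"] J
    by auto
  then have "amplitude A * (moment 0 * \<bar>d0\<bar>) \<le> amplitude A"
    and "amplitude A * (moment 2 / 2 * \<bar>d1\<bar>) \<le> amplitude A"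
    using amplitude_nonneg[of A] A by (simp_all only: mult_left_le)
  then show "\<bar>rmode chi0 K p (psi chi0 K p A s d0 d1) s 0\<bar> \<le> amplitude A"
    and "\<bar>rmode chi0 K p (psi chi0 K p A s d0 d1) s 1\<bar> \<le> amplitude A"
    unfolding rmode_psi_0 rmode_psi_1 using J amplitude_nonneg[of A] A
    by (simp_all add: abs_mult mult.assoc)
qed

lemma good_initial_data_if_small_amplitude:
  assumes A: "1 \<le> A"
    and small: "(7 + 5 * M) * amplitude A < 1 / s powr gam"
      "amplitude A < 1 / s powr (4 * beta p - 1)"
      "(7 + 5 * M) * amplitude A \<le> 1 / s powr (gam - 3 * beta p)"
  shows "good_initial_data chi0 K p gam (7 + 5 * M) A s"
proof -
  let ?a = "amplitude A" and ?r0 = "1 / moment 0" and ?r1 = "2 / moment 2"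
  let ?Phi = "\<lambda>(d0, d1).
    (rmode chi0 K p (psi chi0 K p A s d0 d1) s 0, rmode chi0 K p (psi chi0 K p A s d0 d1) s 1)"
  have r: "0 < ?r0" "?r0 \<le> 2" "0 < ?r1" "?r1 \<le> 2"
    using moment_0_bounds moment_2_bounds by (auto simp: field_simps)
  have "0 < ?a"
    using A s_powr_pos by (simp add: amplitude_def)
  note rectangle = diagonal_scaling_rectangle[OF r(1,3) this, folded rmode_psi_map_eq]
  show ?thesis
    unfolding good_initial_data_def Let_def amplitude_def[symmetric]
  proof (rule exI[of _ "- ?r0"], rule exI[of _ "- ?r1"], rule exI[of _ ?r0], rule exI[of _ ?r1],
      intro conjI)
    show "- ?r0 < ?r0" "- ?r1 < ?r1" "cbox (- ?r0, - ?r1) (?r0, ?r1) \<subseteq> cbox (-2, -2) (2, 2)"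
      using r by (auto simp: cbox_Pair_eq)
    show "inj_on ?Phi (cbox (- ?r0, - ?r1) (?r0, ?r1))"
      and "?Phi ` cbox (- ?r0, - ?r1) (?r0, ?r1) = cbox (- ?a, - ?a) (?a, ?a)"
      and "?Phi ` frontier (cbox (- ?r0, - ?r1) (?r0, ?r1)) \<subseteq> frontier (cbox (- ?a, - ?a) (?a, ?a))"
      and "boundary_degree ?Phi (- ?r0) (- ?r1) ?r0 ?r1 = 1"
      by (fact rectangle)+
  qed (intro allI impI, erule psi_bounds_on_rectangle[OF A small])
qed

end

lemma eventually_good_initial_data:
  assumes admissible: "admissible_chi0 chi0"
    and g: "\<And>x. g differentiable (at x)" "\<And>x. 0 \<le> x \<Longrightarrow> g x = chi0 x"
    and M: "\<And>x. 0 \<le> x \<Longrightarrow> x \<le> 2 \<Longrightarrow> \<bar>deriv g x\<bar> \<le> M"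
    and K: "1 \<le> K" and beta: "0 < beta p" "beta p < 1" and gam: "gam < 2 * beta p + 1"
    and A: "1 \<le> A"
  shows "\<forall>\<^sub>F s in at_top. good_initial_data chi0 K p gam (7 + 5 * M) A s"
proof -
  have "\<forall>\<^sub>F s in at_top. 0 < s \<and> 8 / s powr beta p < 1 / s powr 0
      \<and> (7 + 5 * M) * A / s powr (2 * beta p + 1) < 1 / s powr gam
      \<and> A / s powr (2 * beta p + 1) < 1 / s powr (4 * beta p - 1)
      \<and> (7 + 5 * M) * A / s powr (2 * beta p + 1) < 1 / s powr (gam - 3 * beta p)"
    using beta gam by (intro eventually_conj eventually_gt_at_top eventually_powr_less) auto
  then show ?thesis
  proof eventually_elim
    case (elim s)
    then have "0 < s" and "8 / s powr beta p < 1 / s powr 0"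
      by auto
    then have "8 \<le> 1 * s powr beta p"
      by (simp add: field_simps)
    also have "\<dots> \<le> K * s powr beta p"
      using K by (intro mult_right_mono) auto
    finally interpret large_time_cutoff chi0 g K p s M
      using admissible g M by unfold_locales
    show ?case
      using elim by (intro good_initial_data_if_small_amplitude A) (simp_all add: amplitude_def)
  qed
qed

theorem proposition4p4:
  fixes p mu K gam :: real and chi0 :: "real \<Rightarrow> real"
  assumes "p > 3" and "mu > 0" and "K \<ge> 6"
    and "admissible_chi0 chi0"
    and "3 * beta p < gam" and "gam < min (5 * beta p - 1) (2 * beta p + 1)"
  shows "\<exists>C>0. \<forall>A\<ge>1. \<exists>s03>1. \<forall>s0\<ge>s03.
    (let Phi = (\<lambda>(d0, d1). (rmode chi0 K p (psi chi0 K p A s0 d0 d1) s0 0,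
                             rmode chi0 K p (psi chi0 K p A s0 d0 d1) s0 1));
         a = A / s0 powr (2 * beta p + 1);
         Q = cbox (- a, - a) (a, a)
     in \<exists>a0 a1 b0 b1. a0 < b0 \<and> a1 < b1 \<and>
          cbox (a0, a1) (b0, b1) \<subseteq> cbox (-2, -2) (2, 2) \<and>
       \<comment> \<open>(i)\<close>
          inj_on Phi (cbox (a0, a1) (b0, b1)) \<and>
          Phi ` cbox (a0, a1) (b0, b1) = Q \<and>
          Phi ` frontier (cbox (a0, a1) (b0, b1)) \<subseteq> frontier Q \<and>
          boundary_degree Phi a0 a1 b0 b1 = 1 \<and>
       \<comment> \<open>(ii) and (iii)\<close>
          (\<forall>d0 d1. (d0, d1) \<in> cbox (a0, a1) (b0, b1) \<longrightarrow>
             (let f = psi chi0 K p A s0 d0 d1 in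
               (\<forall>y. re chi0 K p f s0 y = 0) \<and>
               (\<forall>y. \<bar>rminus chi0 K p f s0 y\<bar> < (1 + \<bar>y\<bar>^3) / s0 powr gam) \<and>
               \<bar>rmode chi0 K p f s0 0\<bar> \<le> a \<and>
               \<bar>rmode chi0 K p f s0 1\<bar> \<le> a \<and>
               \<bar>rmode chi0 K p f s0 2\<bar> < 1 / s0 powr (4 * beta p - 1) \<and>
               f \<in> vartheta chi0 K p gam A s0 \<and>
               (\<forall>y. \<bar>deriv f y\<bar> \<le> C * a) \<and>
               C * a \<le> 1 / s0 powr (gam - 3 * beta p) \<and>
               (\<forall>y. \<bar>deriv (rminus chi0 K p f s0) y\<bar> \<le> (1 + \<bar>y\<bar>^3) / s0 powr gam))))"
proof -
  obtain g M where g: "\<And>x. g differentiable (at x)" "\<And>x. 0 \<le> x \<Longrightarrow> g x = chi0 x"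
    and M: "\<And>x. 0 \<le> x \<Longrightarrow> x \<le> 2 \<Longrightarrow> \<bar>deriv g x\<bar> \<le> M"
    using admissible_chi0_smooth_extension[OF assms(4)] by blast
  have beta: "0 < beta p" "beta p < 1"
    using assms(1) by (simp_all add: beta_def field_simps)
  have "\<exists>s03>1. \<forall>s0\<ge>s03. good_initial_data chi0 K p gam (7 + 5 * M) A s0" if "1 \<le> A" for A
  proof -
    have "\<forall>\<^sub>F s in at_top. good_initial_data chi0 K p gam (7 + 5 * M) A s"
      using assms(3,6) beta by (intro eventually_good_initial_data[OF assms(4) g M] that) auto
    then obtain s03 where "\<forall>s0\<ge>s03. good_initial_data chi0 K p gam (7 + 5 * M) A s0"
      by (auto simp: eventually_at_top_linorder)
    then show ?thesis
      by (intro exI[of _ "max s03 2"]) auto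
  qed
  moreover have "0 < 7 + 5 * M"
    using M[of 0] by linarith
  ultimately have "\<exists>C>0. \<forall>A\<ge>1. \<exists>s03>1. \<forall>s0\<ge>s03. good_initial_data chi0 K p gam C A s0"
    by blast
  then show ?thesis
    unfolding good_initial_data_def psi_bounds_def Let_def .
qed

end
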